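(* Let $Q$ be a finite quiver without oriented cycles, $k$ a field, and $I$ an admissible ideal of the path algebra $kQ$. Let $d\colon kQ\to kQ$ be a $k$-linear map such that $d(I)\subseteq I$ and such that for every path $u$ of $Q$ there is $t_u\in k$ with $d(u)=t_uu$. Let $\equiv_I$ be the smallest equivalence relation on the set of paths of $Q$ such that $u\equiv_I v$ whenever $u,v$ appear with nonzero coefficient in a same minimal relation of $I$. Then for all paths $u,v$, $u\equiv_I v$ implies $t_u=t_v$.
   Context: An ideal $I$ of $kQ$ is admissible if $(kQ^+)^N\subseteq I\subseteq(kQ^+)^2$ for some $N\ge 2$, where $kQ^+$ is the ideal generated by the arrows. A minimal relation of $I$ is a nonzero element $\sum_{i=1}^st_iu_i\in I$ with $t_i\in k^*$ and $u_i$ pairwise distinct paths such that no nonempty proper subsum $\sum_{i\in S}t_iu_i$ lies in $I$. *)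

theory Defs
  imports Main "HOL-Library.Function_Algebras"
begin

text \<open>A path is a pair (x, as): a start vertex x and a list of arrows a1 ... an, composed
left to right (t(a_i) = s(a_{i+1})); the empty list gives the trivial path e_x.\<close>

definition quiver :: "'v set \<Rightarrow> 'a set \<Rightarrow> ('a \<Rightarrow> 'v) \<Rightarrow> ('a \<Rightarrow> 'v) \<Rightarrow> bool" where
  "quiver V A s t \<longleftrightarrow> (\<forall>a\<in>A. s a \<in> V \<and> t a \<in> V)"

definition finite_quiver :: "'v set \<Rightarrow> 'a set \<Rightarrow> ('a \<Rightarrow> 'v) \<Rightarrow> ('a \<Rightarrow> 'v) \<Rightarrow> bool" where
  "finite_quiver V A s t \<longleftrightarrow> quiver V A s t \<and> finite V \<and> finite A"

definition is_path :: "'v set \<Rightarrow> 'a set \<Rightarrow> ('a \<Rightarrow> 'v) \<Rightarrow> ('a \<Rightarrow> 'v) \<Rightarrow> 'v \<times> 'a list \<Rightarrow> bool" where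
  "is_path V A s t p \<longleftrightarrow> (case p of (x, as) \<Rightarrow>
     x \<in> V \<and> set as \<subseteq> A \<and> (as \<noteq> [] \<longrightarrow> s (hd as) = x) \<and>
     (\<forall>i. Suc i < length as \<longrightarrow> t (as ! i) = s (as ! Suc i)))"

definition paths :: "'v set \<Rightarrow> 'a set \<Rightarrow> ('a \<Rightarrow> 'v) \<Rightarrow> ('a \<Rightarrow> 'v) \<Rightarrow> ('v \<times> 'a list) set" where
  "paths V A s t = {p. is_path V A s t p}"

definition path_end :: "('a \<Rightarrow> 'v) \<Rightarrow> 'v \<times> 'a list \<Rightarrow> 'v" where
  "path_end t p = (case p of (x, as) \<Rightarrow> if as = [] then x else t (last as))"

definition acyclic_quiver :: "'v set \<Rightarrow> 'a set \<Rightarrow> ('a \<Rightarrow> 'v) \<Rightarrow> ('a \<Rightarrow> 'v) \<Rightarrow> bool" where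
  "acyclic_quiver V A s t \<longleftrightarrow>
     (\<forall>x as. is_path V A s t (x, as) \<and> as \<noteq> [] \<longrightarrow> path_end t (x, as) \<noteq> x)"

definition path_alg :: "'v set \<Rightarrow> 'a set \<Rightarrow> ('a \<Rightarrow> 'v) \<Rightarrow> ('a \<Rightarrow> 'v) \<Rightarrow> ('v \<times> 'a list \<Rightarrow> 'k::field) set" where
  "path_alg V A s t = {f. (\<forall>p. f p \<noteq> 0 \<longrightarrow> p \<in> paths V A s t) \<and> finite {p. f p \<noteq> 0}}"

text \<open>Multiplication in kQ: (f g)(p) = sum over factorisations p = q r of f(q) g(r).\<close>
definition pmult :: "('a \<Rightarrow> 'v) \<Rightarrow> ('v \<times> 'a list \<Rightarrow> 'k::field) \<Rightarrow> ('v \<times> 'a list \<Rightarrow> 'k) \<Rightarrow> ('v \<times> 'a list \<Rightarrow> 'k)" where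
  "pmult t f g = (\<lambda>p. case p of (x, cs) \<Rightarrow>
     (\<Sum>i\<in>{0..length cs}. f (x, take i cs) * g (path_end t (x, take i cs), drop i cs)))"

definition pbasis :: "'v \<times> 'a list \<Rightarrow> ('v \<times> 'a list \<Rightarrow> 'k::field)" where
  "pbasis u = (\<lambda>q. if q = u then 1 else 0)"

definition scal :: "'k::field \<Rightarrow> ('p \<Rightarrow> 'k) \<Rightarrow> ('p \<Rightarrow> 'k)" where
  "scal c f = (\<lambda>p. c * f p)"

definition is_ideal :: "'v set \<Rightarrow> 'a set \<Rightarrow> ('a \<Rightarrow> 'v) \<Rightarrow> ('a \<Rightarrow> 'v) \<Rightarrow> ('v \<times> 'a list \<Rightarrow> 'k::field) set \<Rightarrow> bool" where
  "is_ideal V A s t I \<longleftrightarrow> I \<subseteq> path_alg V A s t \<and> 0 \<in> I \<and>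
     (\<forall>f\<in>I. \<forall>g\<in>I. f + g \<in> I) \<and> (\<forall>c. \<forall>f\<in>I. scal c f \<in> I) \<and>
     (\<forall>f\<in>I. \<forall>g\<in>path_alg V A s t. pmult t g f \<in> I \<and> pmult t f g \<in> I)"

definition gen_ideal :: "'v set \<Rightarrow> 'a set \<Rightarrow> ('a \<Rightarrow> 'v) \<Rightarrow> ('a \<Rightarrow> 'v) \<Rightarrow> ('v \<times> 'a list \<Rightarrow> 'k::field) set \<Rightarrow> ('v \<times> 'a list \<Rightarrow> 'k) set" where
  "gen_ideal V A s t S = \<Inter>{J. is_ideal V A s t J \<and> S \<subseteq> J}"

definition ideal_prod :: "'v set \<Rightarrow> 'a set \<Rightarrow> ('a \<Rightarrow> 'v) \<Rightarrow> ('a \<Rightarrow> 'v) \<Rightarrow> ('v \<times> 'a list \<Rightarrow> 'k::field) set \<Rightarrow> ('v \<times> 'a list \<Rightarrow> 'k) set \<Rightarrow> ('v \<times> 'a list \<Rightarrow> 'k) set" where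
  "ideal_prod V A s t J K = gen_ideal V A s t {pmult t f g | f g. f \<in> J \<and> g \<in> K}"

fun ideal_pow :: "'v set \<Rightarrow> 'a set \<Rightarrow> ('a \<Rightarrow> 'v) \<Rightarrow> ('a \<Rightarrow> 'v) \<Rightarrow> ('v \<times> 'a list \<Rightarrow> 'k::field) set \<Rightarrow> nat \<Rightarrow> ('v \<times> 'a list \<Rightarrow> 'k) set" where
  "ideal_pow V A s t J 0 = path_alg V A s t"
| "ideal_pow V A s t J (Suc n) = ideal_prod V A s t (ideal_pow V A s t J n) J"

definition arrow_ideal :: "'v set \<Rightarrow> 'a set \<Rightarrow> ('a \<Rightarrow> 'v) \<Rightarrow> ('a \<Rightarrow> 'v) \<Rightarrow> ('v \<times> 'a list \<Rightarrow> 'k::field) set" where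
  "arrow_ideal V A s t = gen_ideal V A s t {pbasis (s a, [a]) | a. a \<in> A}"

definition admissible :: "'v set \<Rightarrow> 'a set \<Rightarrow> ('a \<Rightarrow> 'v) \<Rightarrow> ('a \<Rightarrow> 'v) \<Rightarrow> ('v \<times> 'a list \<Rightarrow> 'k::field) set \<Rightarrow> bool" where
  "admissible V A s t I \<longleftrightarrow> is_ideal V A s t I \<and>
     (\<exists>N\<ge>2. ideal_pow V A s t (arrow_ideal V A s t) N \<subseteq> I \<and>
            I \<subseteq> ideal_pow V A s t (arrow_ideal V A s t) 2)"

definition minimal_relation :: "('v \<times> 'a list \<Rightarrow> 'k::field) set \<Rightarrow> ('v \<times> 'a list \<Rightarrow> 'k) \<Rightarrow> bool" where
  "minimal_relation I r \<longleftrightarrow> r \<in> I \<and> r \<noteq> 0 \<and>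
     (\<forall>S. S \<noteq> {} \<and> S \<subset> {p. r p \<noteq> 0} \<longrightarrow> (\<lambda>p. if p \<in> S then r p else 0) \<notin> I)"

definition minrel_pairs :: "('v \<times> 'a list \<Rightarrow> 'k::field) set \<Rightarrow> (('v \<times> 'a list) \<times> ('v \<times> 'a list)) set" where
  "minrel_pairs I = {(u, v). \<exists>r. minimal_relation I r \<and> r u \<noteq> 0 \<and> r v \<noteq> 0}"

definition equiv_I :: "'v set \<Rightarrow> 'a set \<Rightarrow> ('a \<Rightarrow> 'v) \<Rightarrow> ('a \<Rightarrow> 'v) \<Rightarrow> ('v \<times> 'a list \<Rightarrow> 'k::field) set \<Rightarrow> (('v \<times> 'a list) \<times> ('v \<times> 'a list)) set" where
  "equiv_I V A s t I = \<Inter>{E. equiv (paths V A s t) E \<and> minrel_pairs I \<subseteq> E}"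

definition k_linear_on :: "'v set \<Rightarrow> 'a set \<Rightarrow> ('a \<Rightarrow> 'v) \<Rightarrow> ('a \<Rightarrow> 'v) \<Rightarrow> (('v \<times> 'a list \<Rightarrow> 'k::field) \<Rightarrow> ('v \<times> 'a list \<Rightarrow> 'k)) \<Rightarrow> bool" where
  "k_linear_on V A s t d \<longleftrightarrow>
     (\<forall>f\<in>path_alg V A s t. d f \<in> path_alg V A s t) \<and>
     (\<forall>f\<in>path_alg V A s t. \<forall>g\<in>path_alg V A s t. d (f + g) = d f + d g) \<and>
     (\<forall>c. \<forall>f\<in>path_alg V A s t. d (scal c f) = scal c (d f))"

end

theory Submission
  imports Defs
begin

text \<open>Since d is diagonal in the path basis and maps I into I, the operator
\<open>\<Prod>\<^sub>l (d - l)\<close> maps I into I for every finite set of scalars l. As an element of kQ has finite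
support, choosing l to range over the eigenvalues occurring in r \<in> I other than c and
rescaling (Lagrange interpolation) shows that the eigencomponent of r for the eigenvalue c
lies in I. For a minimal relation this component is a nonempty subsum, hence all of r, so all
paths of a minimal relation share the same eigenvalue. Equality of eigenvalues is an
equivalence relation on paths, so it contains \<open>\<equiv>\<^sub>I\<close>.\<close>

lemma k_linear_on_zero:
  fixes d :: "('v \<times> 'a list \<Rightarrow> 'k::field) \<Rightarrow> ('v \<times> 'a list \<Rightarrow> 'k)"
  assumes "k_linear_on V A s t d"
  shows "d 0 = 0"
proof -
  have "0 \<in> path_alg V A s t"
    unfolding path_alg_def by simp
  then have "d (0 + 0) = d 0 + d 0"
    using assms unfolding k_linear_on_def by blast
  then show ?thesis by simp
qed

lemma pbasis_in_path_alg:
  assumes "u \<in> paths V A s t"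
  shows "pbasis u \<in> path_alg V A s t"
  using assms unfolding path_alg_def pbasis_def by auto

lemma scal_in_path_alg:
  assumes "f \<in> path_alg V A s t"
  shows "scal c f \<in> path_alg V A s t"
  using assms unfolding path_alg_def scal_def by auto

lemma diagonal_map_apply:
  fixes g :: "'v \<times> 'a list \<Rightarrow> 'k::field"
  assumes lin: "k_linear_on V A s t d"
    and diag: "\<forall>u\<in>paths V A s t. d (pbasis u) = scal (tu u) (pbasis u)"
    and g: "g \<in> path_alg V A s t"
  shows "d g = (\<lambda>p. tu p * g p)"
proof -
  have "d g = (\<lambda>p. tu p * g p)"
    if "finite F" "{p. g p \<noteq> 0} = F" "g \<in> path_alg V A s t" for F and g :: "_ \<Rightarrow> 'k"
    using that
  proof (induction F arbitrary: g rule: finite_induct)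
    case empty
    then have "g = 0" by (auto simp: fun_eq_iff)
    then show ?case using k_linear_on_zero[OF lin] by (simp add: zero_fun_def)
  next
    case (insert x F)
    define g' where "g' = g(x := 0)"
    have "x \<in> paths V A s t"
      using insert.prems unfolding path_alg_def by blast
    then have basis_x: "pbasis x \<in> path_alg V A s t"
      and dx: "d (pbasis x) = scal (tu x) (pbasis x)"
      using diag by (auto intro: pbasis_in_path_alg)
    have supp_g': "{p. g' p \<noteq> 0} = F"
      using insert unfolding g'_def by auto
    have g': "g' \<in> path_alg V A s t"
      using insert.prems(2) supp_g' insert.hyps(1) unfolding path_alg_def g'_def by auto
    have "g = scal (g x) (pbasis x) + g'"
      by (auto simp: fun_eq_iff g'_def scal_def pbasis_def)
    then have "d g = scal (g x) (d (pbasis x)) + d g'"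
      using lin basis_x g' scal_in_path_alg[OF basis_x] unfolding k_linear_on_def by metis
    also have "d g' = (\<lambda>p. tu p * g' p)"
      using insert.IH supp_g' g' by blast
    finally show ?case
      using dx by (auto simp: fun_eq_iff g'_def scal_def pbasis_def)
  qed
  moreover have "finite {p. g p \<noteq> 0}"
    using g unfolding path_alg_def by auto
  ultimately show ?thesis using g by blast
qed

context
  fixes V :: "'v set" and A :: "'a set" and s t :: "'a \<Rightarrow> 'v"
    and I :: "('v \<times> 'a list \<Rightarrow> 'k::field) set"
    and d :: "('v \<times> 'a list \<Rightarrow> 'k) \<Rightarrow> ('v \<times> 'a list \<Rightarrow> 'k)"
    and tu :: "'v \<times> 'a list \<Rightarrow> 'k"
  assumes ideal: "is_ideal V A s t I"
    and lin: "k_linear_on V A s t d"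
    and d_stable: "\<forall>f\<in>I. d f \<in> I"
    and diag: "\<forall>u\<in>paths V A s t. d (pbasis u) = scal (tu u) (pbasis u)"
begin

lemma eigen_shift_mem_ideal:
  assumes "f \<in> I"
  shows "(\<lambda>p. (tu p - l) * f p) \<in> I"
proof -
  have "f \<in> path_alg V A s t"
    using ideal assms unfolding is_ideal_def by blast
  then have "(\<lambda>p. (tu p - l) * f p) = d f + scal (- l) f"
    using diagonal_map_apply[OF lin diag] by (auto simp: fun_eq_iff scal_def algebra_simps)
  moreover have "d f \<in> I" "scal (- l) f \<in> I"
    using assms d_stable ideal unfolding is_ideal_def by auto
  ultimately show ?thesis
    using ideal unfolding is_ideal_def by simp
qed

lemma eigen_prod_mem_ideal:
  assumes "finite L" "f \<in> I"
  shows "(\<lambda>p. (\<Prod>l\<in>L. tu p - l) * f p) \<in> I"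
  using assms(1)
proof (induction L rule: finite_induct)
  case empty
  then show ?case using assms(2) by simp
next
  case (insert l L)
  then show ?case
    using eigen_shift_mem_ideal[OF insert.IH, of l] by (simp add: mult.assoc)
qed

lemma eigencomponent_mem_ideal:
  assumes r: "r \<in> I"
  shows "(\<lambda>p. if tu p = c then r p else 0) \<in> I"
proof -
  have "finite {p. r p \<noteq> 0}"
    using r ideal unfolding is_ideal_def path_alg_def by blast
  then have finL: "finite (tu ` {p. r p \<noteq> 0} - {c})" (is "finite ?L")
    by simp
  define a where "a = (\<Prod>l\<in>?L. c - l)"
  have "a \<noteq> 0"
    unfolding a_def using finL by auto
  have "(\<lambda>p. (\<Prod>l\<in>?L. tu p - l) * r p) = scal a (\<lambda>p. if tu p = c then r p else 0)"
  proof
    fix q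
    show "(\<Prod>l\<in>?L. tu q - l) * r q = scal a (\<lambda>p. if tu p = c then r p else 0) q"
    proof (cases "r q = 0 \<or> tu q = c")
      case True
      then show ?thesis by (auto simp: scal_def a_def)
    next
      case False
      then have "(\<Prod>l\<in>?L. tu q - l) = 0"
        using finL by (auto intro: prod_zero)
      then show ?thesis using False by (simp add: scal_def)
    qed
  qed
  then have "scal a (\<lambda>p. if tu p = c then r p else 0) \<in> I"
    using eigen_prod_mem_ideal[OF finL r] by simp
  then have "scal (1 / a) (scal a (\<lambda>p. if tu p = c then r p else 0)) \<in> I"
    using ideal unfolding is_ideal_def by blast
  then show ?thesis
    using \<open>a \<noteq> 0\<close> by (simp add: scal_def)
qed

lemma minimal_relation_eigenvalue_eq:
  assumes mr: "minimal_relation I r" and "r u \<noteq> 0" "r v \<noteq> 0"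
  shows "tu u = tu v"
proof -
  define S where "S = {p. r p \<noteq> 0 \<and> tu p = tu u}"
  have "(\<lambda>p. if p \<in> S then r p else 0) = (\<lambda>p. if tu p = tu u then r p else 0)"
    by (auto simp: S_def fun_eq_iff)
  then have "(\<lambda>p. if p \<in> S then r p else 0) \<in> I"
    using eigencomponent_mem_ideal mr unfolding minimal_relation_def by simp
  moreover have "u \<in> S" "S \<subseteq> {p. r p \<noteq> 0}"
    using \<open>r u \<noteq> 0\<close> by (auto simp: S_def)
  ultimately have "S = {p. r p \<noteq> 0}"
    using mr unfolding minimal_relation_def by blast
  then have "v \<in> S"
    using \<open>r v \<noteq> 0\<close> by blast
  then show ?thesis
    by (simp add: S_def)
qed

lemma equiv_I_eigenvalue_eq:
  assumes "(u, v) \<in> equiv_I V A s t I"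
  shows "tu u = tu v"
proof -
  define E where "E = {(x, y). x \<in> paths V A s t \<and> y \<in> paths V A s t \<and> tu x = tu y}"
  have "equiv (paths V A s t) E"
    unfolding equiv_def refl_on_def sym_def trans_def E_def by auto
  moreover have "minrel_pairs I \<subseteq> E"
  proof
    fix x
    assume "x \<in> minrel_pairs I"
    then obtain a b r where x: "x = (a, b)" and mr: "minimal_relation I r"
      and "r a \<noteq> 0" "r b \<noteq> 0"
      unfolding minrel_pairs_def by blast
    then have "a \<in> paths V A s t" "b \<in> paths V A s t"
      using ideal unfolding minimal_relation_def is_ideal_def path_alg_def by blast+
    then show "x \<in> E"
      using minimal_relation_eigenvalue_eq[OF mr \<open>r a \<noteq> 0\<close> \<open>r b \<noteq> 0\<close>] x
      unfolding E_def by simp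
  qed
  ultimately have "equiv_I V A s t I \<subseteq> E"
    unfolding equiv_I_def by blast
  then show ?thesis
    using assms unfolding E_def by auto
qed

end

theorem lemma1p2:
  fixes V :: "'v set" and A :: "'a set" and s t :: "'a \<Rightarrow> 'v"
    and I :: "('v \<times> 'a list \<Rightarrow> 'k::field) set"
    and d :: "('v \<times> 'a list \<Rightarrow> 'k) \<Rightarrow> ('v \<times> 'a list \<Rightarrow> 'k)"
    and tu :: "'v \<times> 'a list \<Rightarrow> 'k"
  assumes "finite_quiver V A s t"
    and "acyclic_quiver V A s t"
    and "admissible V A s t I"
    and "k_linear_on V A s t d"
    and "\<forall>f\<in>I. d f \<in> I"
    and "\<forall>u\<in>paths V A s t. d (pbasis u) = scal (tu u) (pbasis u)"
    and "(u, v) \<in> equiv_I V A s t I"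
  shows "tu u = tu v"
proof -
  have "is_ideal V A s t I"
    using \<open>admissible V A s t I\<close> unfolding admissible_def by blast
  then show ?thesis
    using equiv_I_eigenvalue_eq assms(4-7) by blast
qed

end
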